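(* Let $V^{\bullet\bullet}$ be an $N=2$ supersymmetric complex. Then every row of $V^{\bullet\bullet}$ except possibly the $0$th row (i.e. each complex $(V^{\bullet,j},D_1)$ with $j\neq0$) is exact with respect to $D_1$, and every column except possibly the $0$th column (each $(V^{i,\bullet},D_2)$ with $i\ne0$) is exact with respect to $D_2$.
   Context: Let $G=\underline{\mathrm{Aut}}(\mathbb A^{0|2})$ be the group super-scheme of automorphisms of $\mathrm{Spec}\,\Lambda[\eta_1,\eta_2]$ ($\eta_i$ odd); its $R$-points are substitutions $\eta_i\mapsto a^i+b^i_1\eta_1+b^i_2\eta_2+c^i\eta_1\eta_2$ with $(b^i_j)$ invertible; it is isomorphic to $SL_{1|2}$, with Lie superalgebra $\mathrm{Der}\,\Lambda[\eta_1,\eta_2]$. An $N=2$ supersymmetric complex is a super vector space $V$ with an action of $G$. The action of the torus $\mathbb G_m\times\mathbb G_m$ (diagonal substitutions $\eta_i\mapsto b_i\eta_i$) gives a bigrading $V=\bigoplus V^{ij}$ on which $\Theta_1=\eta_1\partial/\partial\eta_1$ acts by $i$ and $\Theta_2=\eta_2\partial/\partial\eta_2$ by $j$; the odd derivations $D_1=\partial/\partial\eta_1$, $D_2=\partial/\partial\eta_2$ act as anticommuting square-zero differentials of bidegrees $(1,0)$ and $(0,1)$, making $V^{\bullet\bullet}$ a double complex; row $j$ means $V^{\bullet,j}$ and column $i$ means $V^{i,\bullet}$. *)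

theory Defs
  imports Complex_Main "HOL-Library.Function_Algebras"
begin

text \<open>The Grassmann algebra Lambda[eta1,eta2] over a field 'k, as coefficient
functions on the four monomials 1, eta1, eta2, eta1 eta2.\<close>

datatype idx = I1 | I2
datatype mon = M0 | M1 | M2 | M12

type_synonym 'k grass = "mon \<Rightarrow> 'k"

definition eta_mul :: "idx \<Rightarrow> 'k::comm_ring_1 grass \<Rightarrow> 'k grass" where
  "eta_mul a f = (case a of
      I1 \<Rightarrow> (\<lambda>m. case m of M0 \<Rightarrow> 0 | M1 \<Rightarrow> f M0 | M2 \<Rightarrow> 0 | M12 \<Rightarrow> f M2)
    | I2 \<Rightarrow> (\<lambda>m. case m of M0 \<Rightarrow> 0 | M1 \<Rightarrow> 0 | M2 \<Rightarrow> f M0 | M12 \<Rightarrow> - f M1))"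

text \<open>The odd (left) partial derivatives d/d eta_a.\<close>
definition pd :: "idx \<Rightarrow> 'k::comm_ring_1 grass \<Rightarrow> 'k grass" where
  "pd a f = (case a of
      I1 \<Rightarrow> (\<lambda>m. case m of M0 \<Rightarrow> f M1 | M1 \<Rightarrow> 0 | M2 \<Rightarrow> f M12 | M12 \<Rightarrow> 0)
    | I2 \<Rightarrow> (\<lambda>m. case m of M0 \<Rightarrow> f M2 | M1 \<Rightarrow> - f M12 | M2 \<Rightarrow> 0 | M12 \<Rightarrow> 0))"

text \<open>Homogeneous basis of the Lie superalgebra Der Lambda[eta1,eta2]:
  E a b = eta_a d/d eta_b (even), D b = d/d eta_b (odd),
  F b = eta1 eta2 d/d eta_b (odd).\<close>
datatype gb = E idx idx | D idx | F idx

definition gbasis :: "gb set" where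
  "gbasis = {E I1 I1, E I1 I2, E I2 I1, E I2 I2, D I1, D I2, F I1, F I2}"

fun gb_odd :: "gb \<Rightarrow> bool" where
  "gb_odd (E a b) = False"
| "gb_odd (D b) = True"
| "gb_odd (F b) = True"

fun gb_op :: "gb \<Rightarrow> 'k::comm_ring_1 grass \<Rightarrow> 'k grass" where
  "gb_op (E a b) = eta_mul a \<circ> pd b"
| "gb_op (D b) = pd b"
| "gb_op (F b) = eta_mul I1 \<circ> eta_mul I2 \<circ> pd b"

definition scomm :: "bool \<Rightarrow> ('a \<Rightarrow> 'a::ab_group_add) \<Rightarrow> ('a \<Rightarrow> 'a) \<Rightarrow> 'a \<Rightarrow> 'a" where
  "scomm s A B = (\<lambda>u. if s then A (B u) + B (A u) else A (B u) - B (A u))"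

text \<open>Bigraded piece V^{ij}: Theta1 = eta1 d/d eta1 acts by i, Theta2 = eta2 d/d eta2 acts by j.\<close>
definition Vbig :: "('k::field \<Rightarrow> 'v \<Rightarrow> 'v) \<Rightarrow> (gb \<Rightarrow> 'v \<Rightarrow> 'v) \<Rightarrow> int \<Rightarrow> int \<Rightarrow> 'v set" where
  "Vbig scale rho i j =
     {v. rho (E I1 I1) v = scale (of_int i) v \<and> rho (E I2 I2) v = scale (of_int j) v}"

text \<open>An N=2 supersymmetric complex, at the infinitesimal level: a super vector space
  V = V_even (+) V_odd over 'k with an action of Der Lambda[eta1,eta2]
  (by parity-respecting linear operators; with the sign convention
  [rho x, rho y] = - rho [x,y] coming from the group acting by substitutions,
  which is the convention under which D1, D2 have bidegrees (1,0), (0,1)),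
  such that V is the sum of the joint weight spaces V^{ij} of Theta1, Theta2.\<close>
definition is_N2_susy_complex ::
  "('k::field_char_0 \<Rightarrow> 'v::ab_group_add \<Rightarrow> 'v) \<Rightarrow> (bool \<Rightarrow> 'v set) \<Rightarrow> (gb \<Rightarrow> 'v \<Rightarrow> 'v) \<Rightarrow> bool"
where
  "is_N2_susy_complex scale Vpar rho \<longleftrightarrow>
     vector_space scale \<and>
     (\<forall>p. Modules.module.subspace scale (Vpar p)) \<and>
     (\<forall>v. \<exists>!w. fst w \<in> Vpar False \<and> snd w \<in> Vpar True \<and> v = fst w + snd w) \<and>
     (\<forall>x. Vector_Spaces.linear scale scale (rho x)) \<and>
     (\<forall>x p. rho x ` Vpar p \<subseteq> Vpar (p \<noteq> gb_odd x)) \<and>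
     (\<forall>x\<in>gbasis. \<forall>y\<in>gbasis. \<forall>c :: gb \<Rightarrow> 'k.
        scomm (gb_odd x \<and> gb_odd y) (gb_op x) (gb_op y)
          = (\<lambda>f m. \<Sum>z\<in>gbasis. c z * gb_op z f m)
        \<longrightarrow> scomm (gb_odd x \<and> gb_odd y) (rho x) (rho y)
          = (\<lambda>v. - (\<Sum>z\<in>gbasis. scale (c z) (rho z v)))) \<and>
     (\<forall>v. v \<in> Modules.module.span scale (\<Union>i j. Vbig scale rho i j))"

end

theory Submission
  imports Defs
begin

text \<open>In Der \<Lambda>[\<eta>1,\<eta>2] one has [\<partial>1, \<eta>1\<eta>2\<partial>2] = \<eta>2\<partial>2 = \<Theta>2, while \<eta>1\<eta>2\<partial>2 has
  bidegree (-1,0). Hence on a row V^{\<bullet>,j} the operator \<eta>1\<eta>2\<partial>2, divided by -j, is a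
  contracting homotopy for D1 as soon as j \<noteq> 0: every D1-cycle v of bidegree (i,j) is the
  boundary of a multiple of \<rho>(\<eta>1\<eta>2\<partial>2) v, of bidegree (i-1,j). The columns are symmetric,
  using [\<partial>2, \<eta>1\<eta>2\<partial>1] = -\<Theta>1 and dividing by i.\<close>

context vector_space
begin

lemma linear_scale_commute: "Vector_Spaces.linear scale scale h \<Longrightarrow> h (scale a u) = scale a (h u)"
  by (simp add: Vector_Spaces.linear_iff)

lemma eigenvector_shift:
  assumes "Vector_Spaces.linear scale scale h"
    and "\<theta> (h u) - h (\<theta> u) = scale b (h u)"
    and "\<theta> u = scale c u"
  shows "\<theta> (h u) = scale (c + b) (h u)"
  using assms by (simp add: linear_scale_commute scale_left_distrib diff_eq_eq)

lemma linear_uminus_commute: "Vector_Spaces.linear scale scale h \<Longrightarrow> h (- u) = - h u"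
  using linear_scale_commute[of h "- 1" u] by simp

lemma linear_zero: "Vector_Spaces.linear scale scale h \<Longrightarrow> h 0 = 0"
  using linear_scale_commute[of h 0 0] by simp

lemma cycle_is_boundary:
  assumes d: "Vector_Spaces.linear scale scale d" and h: "Vector_Spaces.linear scale scale h"
    and homotopy: "d (h v) + h (d v) = scale a (\<theta> v)"
    and "\<theta> v = scale c v" "a * c \<noteq> 0" "d v = 0"
  shows "d (scale (inverse (a * c)) (h v)) = v"
proof -
  have "d (h v) = scale (a * c) v"
    using homotopy assms(4,6) linear_zero[OF h] by simp
  then show ?thesis
    using assms(5) by (simp add: linear_scale_commute[OF d] field_simps)
qed

end

lemma der_bracket_D1_F2:
  "scomm (gb_odd (D I1) \<and> gb_odd (F I2)) (gb_op (D I1)) (gb_op (F I2))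
     = (\<lambda>f m. 1 * gb_op (E I2 I2) (f :: 'k::comm_ring_1 grass) m)"
  by (auto simp: scomm_def eta_mul_def pd_def fun_eq_iff split: mon.split)

lemma der_bracket_E11_F2:
  "scomm (gb_odd (E I1 I1) \<and> gb_odd (F I2)) (gb_op (E I1 I1)) (gb_op (F I2))
     = (\<lambda>f m. 1 * gb_op (F I2) (f :: 'k::comm_ring_1 grass) m)"
  by (auto simp: scomm_def eta_mul_def pd_def fun_eq_iff split: mon.split)

lemma der_bracket_E22_F2:
  "scomm (gb_odd (E I2 I2) \<and> gb_odd (F I2)) (gb_op (E I2 I2)) (gb_op (F I2))
     = (\<lambda>f m. 0 * gb_op (F I2) (f :: 'k::comm_ring_1 grass) m)"
  by (auto simp: scomm_def eta_mul_def pd_def fun_eq_iff split: mon.split)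

lemma der_bracket_D2_F1:
  "scomm (gb_odd (D I2) \<and> gb_odd (F I1)) (gb_op (D I2)) (gb_op (F I1))
     = (\<lambda>f m. - 1 * gb_op (E I1 I1) (f :: 'k::comm_ring_1 grass) m)"
  by (auto simp: scomm_def eta_mul_def pd_def fun_eq_iff split: mon.split)

lemma der_bracket_E22_F1:
  "scomm (gb_odd (E I2 I2) \<and> gb_odd (F I1)) (gb_op (E I2 I2)) (gb_op (F I1))
     = (\<lambda>f m. 1 * gb_op (F I1) (f :: 'k::comm_ring_1 grass) m)"
  by (auto simp: scomm_def eta_mul_def pd_def fun_eq_iff split: mon.split)

lemma der_bracket_E11_F1:
  "scomm (gb_odd (E I1 I1) \<and> gb_odd (F I1)) (gb_op (E I1 I1)) (gb_op (F I1))
     = (\<lambda>f m. 0 * gb_op (F I1) (f :: 'k::comm_ring_1 grass) m)"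
  by (auto simp: scomm_def eta_mul_def pd_def fun_eq_iff split: mon.split)

lemma N2_susy_complex_vector_space:
  "is_N2_susy_complex scale Vpar rho \<Longrightarrow> vector_space scale"
  by (simp add: is_N2_susy_complex_def)

lemma N2_susy_complex_linear:
  "is_N2_susy_complex scale Vpar rho \<Longrightarrow> Vector_Spaces.linear scale scale (rho x)"
  by (simp add: is_N2_susy_complex_def)

lemma N2_susy_complex_bracket:
  assumes "is_N2_susy_complex scale Vpar rho" "x \<in> gbasis" "y \<in> gbasis" "z \<in> gbasis"
    and "scomm (gb_odd x \<and> gb_odd y) (gb_op x) (gb_op y) = (\<lambda>f m. a * gb_op z f m)"
  shows "scomm (gb_odd x \<and> gb_odd y) (rho x) (rho y) v = scale (- a) (rho z v)"
proof -
  interpret vector_space scale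
    using assms(1) by (rule N2_susy_complex_vector_space)
  define c where "c z' = (if z' = z then a else 0)" for z'
  have fin: "finite gbasis"
    by (simp add: gbasis_def)
  have "(\<Sum>z'\<in>gbasis. c z' * g z') = a * g z" for g :: "gb \<Rightarrow> 'a"
    using fin assms(4) by (simp add: c_def if_distrib[of "\<lambda>t. t * _"] cong: if_cong)
  then have "scomm (gb_odd x \<and> gb_odd y) (gb_op x) (gb_op y) = (\<lambda>f m. \<Sum>z'\<in>gbasis. c z' * gb_op z' f m)"
    using assms(5) by presburger
  then have "scomm (gb_odd x \<and> gb_odd y) (rho x) (rho y) = (\<lambda>v. - (\<Sum>z'\<in>gbasis. scale (c z') (rho z' v)))"
    using assms(1-3) unfolding is_N2_susy_complex_def by blast
  moreover have "(\<Sum>z'\<in>gbasis. scale (c z') (rho z' v)) = scale a (rho z v)"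
    using fin assms(4) by (simp add: c_def if_distrib[of "\<lambda>t. scale t _"] cong: if_cong)
  ultimately show ?thesis
    by simp
qed

lemma N2_susy_row_exact:
  assumes V: "is_N2_susy_complex scale Vpar rho"
    and "j \<noteq> 0" and v: "v \<in> Vbig scale rho i j" and cycle: "rho (D I1) v = 0"
  shows "\<exists>w \<in> Vbig scale rho (i - 1) j. rho (D I1) w = v"
proof -
  interpret vector_space scale
    using V by (rule N2_susy_complex_vector_space)
  have lin: "\<And>x. Vector_Spaces.linear scale scale (rho x)"
    using V by (rule N2_susy_complex_linear)
  have basis: "E I1 I1 \<in> gbasis" "E I2 I2 \<in> gbasis" "D I1 \<in> gbasis" "F I2 \<in> gbasis"
    by (simp_all add: gbasis_def)
  have weights: "rho (E I1 I1) v = scale (of_int i) v" "rho (E I2 I2) v = scale (of_int j) v"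
    using v by (simp_all add: Vbig_def)
  have homotopy: "rho (D I1) (rho (F I2) v) + rho (F I2) (rho (D I1) v) = scale (- 1) (rho (E I2 I2) v)"
    using N2_susy_complex_bracket[OF V basis(3,4,2) der_bracket_D1_F2] by (simp add: scomm_def)
  have shift1: "rho (E I1 I1) (rho (F I2) v) - rho (F I2) (rho (E I1 I1) v) = scale (- 1) (rho (F I2) v)"
    using N2_susy_complex_bracket[OF V basis(1,4,4) der_bracket_E11_F2] by (simp add: scomm_def)
  have shift2: "rho (E I2 I2) (rho (F I2) v) - rho (F I2) (rho (E I2 I2) v) = scale 0 (rho (F I2) v)"
    using N2_susy_complex_bracket[OF V basis(2,4,4) der_bracket_E22_F2] by (simp add: scomm_def)
  define w where "w = scale (inverse (- 1 * of_int j)) (rho (F I2) v)"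
  have "rho (D I1) w = v"
    unfolding w_def using cycle_is_boundary[of "rho (D I1)" "rho (F I2)" v "- 1" "rho (E I2 I2)", OF lin lin homotopy weights(2) _ cycle] \<open>j \<noteq> 0\<close> by simp
  moreover have "w \<in> Vbig scale rho (i - 1) j"
    using eigenvector_shift[of "rho (F I2)" "rho (E I1 I1)", OF lin shift1 weights(1)]
      eigenvector_shift[of "rho (F I2)" "rho (E I2 I2)", OF lin shift2 weights(2)]
    by (simp add: Vbig_def w_def linear_scale_commute[OF lin] linear_uminus_commute[OF lin] scale_left_commute)
  ultimately show ?thesis
    by blast
qed

lemma N2_susy_column_exact:
  assumes V: "is_N2_susy_complex scale Vpar rho"
    and "i \<noteq> 0" and v: "v \<in> Vbig scale rho i j" and cycle: "rho (D I2) v = 0"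
  shows "\<exists>w \<in> Vbig scale rho i (j - 1). rho (D I2) w = v"
proof -
  interpret vector_space scale
    using V by (rule N2_susy_complex_vector_space)
  have lin: "\<And>x. Vector_Spaces.linear scale scale (rho x)"
    using V by (rule N2_susy_complex_linear)
  have basis: "E I1 I1 \<in> gbasis" "E I2 I2 \<in> gbasis" "D I2 \<in> gbasis" "F I1 \<in> gbasis"
    by (simp_all add: gbasis_def)
  have weights: "rho (E I1 I1) v = scale (of_int i) v" "rho (E I2 I2) v = scale (of_int j) v"
    using v by (simp_all add: Vbig_def)
  have homotopy: "rho (D I2) (rho (F I1) v) + rho (F I1) (rho (D I2) v) = scale 1 (rho (E I1 I1) v)"
    using N2_susy_complex_bracket[OF V basis(3,4,1) der_bracket_D2_F1] by (simp add: scomm_def)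
  have shift1: "rho (E I1 I1) (rho (F I1) v) - rho (F I1) (rho (E I1 I1) v) = scale 0 (rho (F I1) v)"
    using N2_susy_complex_bracket[OF V basis(1,4,4) der_bracket_E11_F1] by (simp add: scomm_def)
  have shift2: "rho (E I2 I2) (rho (F I1) v) - rho (F I1) (rho (E I2 I2) v) = scale (- 1) (rho (F I1) v)"
    using N2_susy_complex_bracket[OF V basis(2,4,4) der_bracket_E22_F1] by (simp add: scomm_def)
  define w where "w = scale (inverse (1 * of_int i)) (rho (F I1) v)"
  have "rho (D I2) w = v"
    unfolding w_def using cycle_is_boundary[of "rho (D I2)" "rho (F I1)" v 1 "rho (E I1 I1)",
        OF lin lin homotopy weights(1) _ cycle] \<open>i \<noteq> 0\<close>
    by simp
  moreover have "w \<in> Vbig scale rho i (j - 1)"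
    using eigenvector_shift[of "rho (F I1)" "rho (E I1 I1)", OF lin shift1 weights(1)]
      eigenvector_shift[of "rho (F I1)" "rho (E I2 I2)", OF lin shift2 weights(2)]
    by (simp add: Vbig_def w_def linear_scale_commute[OF lin] scale_left_commute)
  ultimately show ?thesis
    by blast
qed

theorem proposition2p3p7:
  fixes scale :: "'k::field_char_0 \<Rightarrow> 'v::ab_group_add \<Rightarrow> 'v"
    and Vpar :: "bool \<Rightarrow> 'v set"
    and rho :: "gb \<Rightarrow> 'v \<Rightarrow> 'v"
  assumes "is_N2_susy_complex scale Vpar rho"
  shows "(\<forall>i j. j \<noteq> 0 \<longrightarrow> (\<forall>v \<in> Vbig scale rho i j. rho (D I1) v = 0 \<longrightarrow>
             (\<exists>w \<in> Vbig scale rho (i - 1) j. rho (D I1) w = v)))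
       \<and> (\<forall>i j. i \<noteq> 0 \<longrightarrow> (\<forall>v \<in> Vbig scale rho i j. rho (D I2) v = 0 \<longrightarrow>
             (\<exists>w \<in> Vbig scale rho i (j - 1). rho (D I2) w = v)))"
  using N2_susy_row_exact[OF assms] N2_susy_column_exact[OF assms] by blast

end
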